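(* Let $\epsilon,\epsilon_\theta\in[0,1]$ and $\theta\in\mathbb R$. If $\frac{2}{2-\epsilon}+\epsilon_\theta-2\ge 0$, then $\mathsf N^{\rm prono}$ (noise $\epsilon$) and $\mathsf Q_\theta^{\rm prono}$ (noise $\epsilon_\theta$) are jointly measurable. Moreover, if $\epsilon=\epsilon_\theta\ge 1/2$, they are jointly measurable.
   Context: All operators act on $\mathbb C^2$. The noisy projected number POVM: $\mathsf N^{\rm prono}_0=\begin{pmatrix}1-\epsilon/2&0\\0&\epsilon/2\end{pmatrix}$, $\mathsf N^{\rm prono}_1=\begin{pmatrix}\epsilon/2&0\\0&1-\epsilon/2\end{pmatrix}$. The noisy projected quadrature POVM on Borel $Y\subseteq\mathbb R$: $$\mathsf Q_\theta^{\rm prono}(Y)=\int_Y\begin{pmatrix}1&(1-\epsilon_\theta)\sqrt2\,y\,e^{-i\theta}\\(1-\epsilon_\theta)\sqrt2\,y\,e^{i\theta}&(1-\epsilon_\theta)2y^2+\epsilon_\theta\end{pmatrix}\frac{e^{-y^2}\,dy}{\sqrt\pi}.$$ Joint measurability means existence of a POVM $\mathsf G$ on $\{0,1\}\times\mathbb R$ with $\mathsf G(\{n\}\times\mathbb R)=\mathsf N^{\rm prono}_n$ and $\mathsf G(\{0,1\}\times Y)=\mathsf Q_\theta^{\rm prono}(Y)$. *)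

theory Defs
  imports "HOL-Analysis.Analysis"
begin

type_synonym cmat2 = "complex ^ 2 ^ 2"

definition psd :: "cmat2 \<Rightarrow> bool" where
  "psd A \<longleftrightarrow> (\<forall>v :: complex ^ 2.
      Im (\<Sum>i\<in>UNIV. cnj (v $ i) * (A *v v) $ i) = 0 \<and>
      Re (\<Sum>i\<in>UNIV. cnj (v $ i) * (A *v v) $ i) \<ge> 0)"

definition povm :: "'a measure \<Rightarrow> ('a set \<Rightarrow> cmat2) \<Rightarrow> bool" where
  "povm M G \<longleftrightarrow>
     (\<forall>A\<in>sets M. psd (G A)) \<and>
     G (space M) = mat 1 \<and>
     (\<forall>A :: nat \<Rightarrow> 'a set. range A \<subseteq> sets M \<longrightarrow> disjoint_family A \<longrightarrow>
        (\<lambda>k. G (A k)) sums G (\<Union>k. A k))"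

definition N_prono :: "real \<Rightarrow> nat \<Rightarrow> cmat2" where
  "N_prono eps n =
     (if n = 0 then vector [vector [complex_of_real (1 - eps/2), 0],
                             vector [0, complex_of_real (eps/2)]]
      else vector [vector [complex_of_real (eps/2), 0],
                   vector [0, complex_of_real (1 - eps/2)]])"

definition Q_dens :: "real \<Rightarrow> real \<Rightarrow> real \<Rightarrow> cmat2" where
  "Q_dens epsth th y =
     (let w = complex_of_real (exp (- (y\<^sup>2)) / sqrt pi) in
      vector [vector [w * 1, w * (complex_of_real ((1 - epsth) * sqrt 2 * y) * cis (- th))],
              vector [w * (complex_of_real ((1 - epsth) * sqrt 2 * y) * cis th),
                      w * complex_of_real ((1 - epsth) * 2 * y\<^sup>2 + epsth)]])"

definition Q_prono :: "real \<Rightarrow> real \<Rightarrow> real set \<Rightarrow> cmat2" where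
  "Q_prono epsth th Y = (\<chi> i j. set_lebesgue_integral lborel Y (\<lambda>y. Q_dens epsth th y $ i $ j))"

definition jointly_measurable_prono :: "real \<Rightarrow> real \<Rightarrow> real \<Rightarrow> bool" where
  "jointly_measurable_prono eps epsth th \<longleftrightarrow>
     (\<exists>G :: (nat \<times> real) set \<Rightarrow> cmat2.
        povm (count_space {0, 1} \<Otimes>\<^sub>M borel) G \<and>
        (\<forall>n\<in>{0, 1}. G ({n} \<times> UNIV) = N_prono eps n) \<and>
        (\<forall>Y\<in>sets borel. G ({0, 1} \<times> Y) = Q_prono epsth th Y))"

end

theory Submission
  imports Defs "HOL-Probability.Probability"
begin

text \<open>The quadrature density is \<open>w(y) ((1 - \<epsilon>\<^sub>\<theta>) u u\<^sup>* + \<epsilon>\<^sub>\<theta> I)\<close> with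
  \<open>u = (1, \<surd>2 y e\<^sup>i\<^sup>\<theta>)\<close> and Gaussian weight \<open>w\<close> of variance 1/2. Split it over the two number
  outcomes as \<open>G\<^sub>n(y) = w(y) (d u u\<^sup>* + D\<^sub>n)\<close> with \<open>d = (1 - \<epsilon>\<^sub>\<theta>)/2\<close> and diagonal
  \<open>D\<^sub>0 = diag(1 - \<epsilon>/2 - d, \<epsilon>/2 - d)\<close>, \<open>D\<^sub>1 = diag(\<epsilon>/2 - d, 1 - \<epsilon>/2 - d)\<close>.
  Since the weight has mean 0 and \<open>\<integral> w(y) 2y\<^sup>2 dy = 1\<close>, integrating out \<open>y\<close> turns \<open>G\<^sub>n\<close>
  into \<open>N\<^sub>n\<close>, while summing over \<open>n\<close> gives the quadrature density. Each \<open>G\<^sub>n(y)\<close> is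
  positive as soon as \<open>\<epsilon> + \<epsilon>\<^sub>\<theta> \<ge> 1\<close>, and both hypotheses of the theorem imply this.\<close>

lemma
  assumes "0 < \<sigma>"
  shows integrable_normal_density_quadratic:
      "integrable lborel (\<lambda>y. normal_density 0 \<sigma> y * (a + b * y + c * y\<^sup>2))"
    and integral_normal_density_quadratic:
      "integral\<^sup>L lborel (\<lambda>y. normal_density 0 \<sigma> y * (a + b * y + c * y\<^sup>2)) = a + c * \<sigma>\<^sup>2"
proof -
  have m: "integrable lborel (\<lambda>y. normal_density 0 \<sigma> y * y ^ k)" for k
    using integrable_normal_moment[OF assms, of 0 k] by simp
  have expand: "normal_density 0 \<sigma> y * (a + b * y + c * y\<^sup>2)
      = a * normal_density 0 \<sigma> y + b * (normal_density 0 \<sigma> y * y) + c * (normal_density 0 \<sigma> y * y\<^sup>2)" for y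
    by (simp add: algebra_simps power2_eq_square)
  show "integrable lborel (\<lambda>y. normal_density 0 \<sigma> y * (a + b * y + c * y\<^sup>2))"
    unfolding expand using m[of 0] m[of 1] m[of 2] by simp
  have "integral\<^sup>L lborel (\<lambda>y. normal_density 0 \<sigma> y * y) = 0"
    using integral_normal_moment_odd[OF assms, of 0 0] by simp
  moreover have "integral\<^sup>L lborel (\<lambda>y. normal_density 0 \<sigma> y * y\<^sup>2) = \<sigma>\<^sup>2"
    using integral_normal_moment_even[OF assms, of 0 1] by (simp add: power2_eq_square)
  ultimately show "integral\<^sup>L lborel (\<lambda>y. normal_density 0 \<sigma> y * (a + b * y + c * y\<^sup>2)) = a + c * \<sigma>\<^sup>2"
    unfolding expand using m[of 0] m[of 1] m[of 2] integral_normal_density[OF assms] by simp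
qed

lemma sums_set_integral:
  fixes f :: "_ \<Rightarrow> 'a :: {banach, second_countable_topology}"
  assumes A: "\<And>k. A k \<in> sets M" "disjoint_family A"
    and f: "set_integrable M (\<Union>k. A k) f"
  shows "(\<lambda>k. LINT x:A k|M. f x) sums (LINT x:(\<Union>k. A k)|M. f x)"
proof -
  let ?B = "\<lambda>n. \<Union>k<n. A k"
  have finite_sum: "(\<Sum>k<n. LINT x:A k|M. f x) = (LINT x:?B n|M. f x)" for n
    using A f by (intro set_integral_finite_Union[symmetric])
      (auto intro: set_integrable_subset simp: disjoint_family_on_def disjoint_family_on_mono)
  have union: "(\<Union>n. ?B n) = (\<Union>k. A k)" by blast
  have "incseq ?B" by (intro monoI UN_mono) auto
  then have "(\<lambda>n. LINT x:?B n|M. f x) \<longlonglongrightarrow> (LINT x:(\<Union>n. ?B n)|M. f x)"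
    using A f by (intro set_integral_cont_up) (auto simp: union)
  then show ?thesis unfolding sums_def finite_sum union .
qed

lemma
  fixes f :: "'i \<Rightarrow> 'a \<Rightarrow> 'b::{banach, second_countable_topology}"
  assumes "\<And>i. i \<in> I \<Longrightarrow> set_integrable M A (f i)"
  shows set_integrable_sum: "set_integrable M A (\<lambda>x. \<Sum>i\<in>I. f i x)"
    and set_integral_sum: "(LINT x:A|M. \<Sum>i\<in>I. f i x) = (\<Sum>i\<in>I. LINT x:A|M. f i x)"
  using assms unfolding set_lebesgue_integral_def set_integrable_def
  by (simp_all add: scaleR_sum_right integral_sum)

lemma vec_sumsI:
  assumes "\<And>i. (\<lambda>k. f k $ i) sums a $ i"
  shows "f sums a"
  using assms unfolding sums_def by (intro vec_tendstoI) simp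

lemma cmat2_eqI:
  fixes A B :: cmat2
  assumes "A $ 1 $ 1 = B $ 1 $ 1" "A $ 1 $ 2 = B $ 1 $ 2" "A $ 2 $ 1 = B $ 2 $ 1" "A $ 2 $ 2 = B $ 2 $ 2"
  shows "A = B"
  using assms by (simp add: vec_eq_iff forall_2)

definition quad_form :: "complex ^ 2 \<Rightarrow> cmat2 \<Rightarrow> complex" where
  "quad_form v A = (\<Sum>i\<in>UNIV. cnj (v $ i) * (A *v v) $ i)"

lemma psd_iff_quad_form: "psd A \<longleftrightarrow> (\<forall>v. Im (quad_form v A) = 0 \<and> Re (quad_form v A) \<ge> 0)"
  by (simp add: psd_def quad_form_def)

lemma quad_form_eq_sum: "quad_form v A = (\<Sum>i\<in>UNIV. \<Sum>j\<in>UNIV. cnj (v $ i) * v $ j * A $ i $ j)"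
  by (simp add: quad_form_def matrix_vector_mult_def sum_distrib_left algebra_simps)

lemma quad_form_2:
  "quad_form v A = cnj (v $ 1) * (A $ 1 $ 1 * v $ 1 + A $ 1 $ 2 * v $ 2)
                 + cnj (v $ 2) * (A $ 2 $ 1 * v $ 1 + A $ 2 $ 2 * v $ 2)"
  by (simp add: quad_form_def UNIV_2 matrix_vector_mult_def)

lemma psd_add: "psd A \<Longrightarrow> psd B \<Longrightarrow> psd (A + B)"
  by (simp add: psd_iff_quad_form quad_form_def matrix_vector_mult_add_rdistrib
      distrib_left sum.distrib)

definition mat_set_integral :: "real set \<Rightarrow> (real \<Rightarrow> cmat2) \<Rightarrow> cmat2" where
  "mat_set_integral S F = (\<chi> i j. LINT y:S|lborel. F y $ i $ j)"

lemma mat_set_integral_empty [simp]: "mat_set_integral {} F = 0"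
  by (simp add: mat_set_integral_def vec_eq_iff set_lebesgue_integral_def)

lemma mat_set_integral_add:
  assumes "\<And>i j. integrable lborel (\<lambda>y. F y $ i $ j)" "\<And>i j. integrable lborel (\<lambda>y. G y $ i $ j)"
    and "S \<in> sets borel"
  shows "mat_set_integral S F + mat_set_integral S G = mat_set_integral S (\<lambda>y. F y + G y)"
  using assms by (simp add: mat_set_integral_def vec_eq_iff set_integrable_def integrable_mult_indicator)

lemma sums_mat_set_integral:
  assumes "\<And>i j. integrable lborel (\<lambda>y. F y $ i $ j)"
    and "\<And>k. B k \<in> sets borel" "disjoint_family B"
  shows "(\<lambda>k. mat_set_integral (B k) F) sums mat_set_integral (\<Union>k. B k) F"
proof (intro vec_sumsI)
  fix i j
  have "set_integrable lborel (\<Union>k. B k) (\<lambda>y. F y $ i $ j)"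
    using assms unfolding set_integrable_def by (intro integrable_mult_indicator) auto
  then show "(\<lambda>k. mat_set_integral (B k) F $ i $ j) sums mat_set_integral (\<Union>k. B k) F $ i $ j"
    using assms by (simp add: mat_set_integral_def sums_set_integral)
qed

lemma psd_mat_set_integral:
  assumes int: "\<And>i j. integrable lborel (\<lambda>y. F y $ i $ j)" and S: "S \<in> sets borel"
    and psd: "\<And>y. psd (F y)"
  shows "psd (mat_set_integral S F)"
  unfolding psd_iff_quad_form
proof
  fix v
  have "set_integrable lborel S (\<lambda>y. F y $ i $ j)" for i j
    using int S unfolding set_integrable_def by (intro integrable_mult_indicator) auto
  then have "quad_form v (mat_set_integral S F) = (LINT y:S|lborel. quad_form v (F y))"
    by (simp add: quad_form_eq_sum mat_set_integral_def set_integral_sum set_integrable_sum)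
  also have "\<dots> = (LINT y:S|lborel. complex_of_real (Re (quad_form v (F y))))"
    using psd by (intro set_lebesgue_integral_cong) (auto simp: psd_iff_quad_form complex_eq_iff S)
  also have "\<dots> = complex_of_real (LINT y:S|lborel. Re (quad_form v (F y)))"
    by (rule set_integral_complex_of_real)
  finally have "quad_form v (mat_set_integral S F) = complex_of_real (LINT y:S|lborel. Re (quad_form v (F y)))" .
  moreover have "(LINT y:S|lborel. Re (quad_form v (F y))) \<ge> 0"
    using psd unfolding set_lebesgue_integral_def psd_iff_quad_form
    by (intro Bochner_Integration.integral_nonneg) (simp add: indicator_def)
  ultimately show "Im (quad_form v (mat_set_integral S F)) = 0 \<and> Re (quad_form v (mat_set_integral S F)) \<ge> 0"
    by simp
qed

definition gauss_quadratic :: "real \<Rightarrow> real \<Rightarrow> real \<Rightarrow> real \<Rightarrow> complex" where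
  "gauss_quadratic a b c y = complex_of_real (normal_density 0 (sqrt (1/2)) y * (a + b * y + c * y\<^sup>2))"

lemma integrable_gauss_quadratic: "integrable lborel (\<lambda>y. gauss_quadratic a b c y * z)"
  unfolding gauss_quadratic_def
  by (intro integrable_mult_left integrable_of_real integrable_normal_density_quadratic) simp

lemma integral_gauss_quadratic:
  "integral\<^sup>L lborel (\<lambda>y. gauss_quadratic a b c y * z) = complex_of_real (a + c / 2) * z"
  unfolding gauss_quadratic_def integral_mult_left_zero integral_complex_of_real
  by (subst integral_normal_density_quadratic) simp_all

lemma gauss_quadratic_eq: "gauss_quadratic a b c y = complex_of_real (exp (- y\<^sup>2) / sqrt pi * (a + b * y + c * y\<^sup>2))"
  by (simp add: gauss_quadratic_def normal_density_def)

text \<open>The density \<open>w(y) (d u u\<^sup>* + diag(a, b))\<close>, with \<open>u\<close> and \<open>w\<close> as above; \<open>Q_dens\<close> is the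
  case \<open>d = 1 - \<epsilon>\<^sub>\<theta>\<close>, \<open>a = b = \<epsilon>\<^sub>\<theta>\<close>. Every entry has the shape \<open>gauss_quadratic a b c y * z\<close>
  (hence the factors 1) so that the two integration lemmas apply to it verbatim.\<close>
definition rank_one_density :: "real \<Rightarrow> real \<Rightarrow> real \<Rightarrow> real \<Rightarrow> real \<Rightarrow> cmat2" where
  "rank_one_density d a b th y =
     vector [vector [gauss_quadratic (a + d) 0 0 y * 1, gauss_quadratic 0 (d * sqrt 2) 0 y * cis (- th)],
             vector [gauss_quadratic 0 (d * sqrt 2) 0 y * cis th, gauss_quadratic b 0 (2 * d) y * 1]]"

lemma integrable_rank_one_density: "integrable lborel (\<lambda>y. rank_one_density d a b th y $ i $ j)"
  using exhaust_2[of i] exhaust_2[of j]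
  by (auto simp: rank_one_density_def integrable_gauss_quadratic simp del: mult_1_right)

lemma mat_set_integral_UNIV_rank_one_density:
  "mat_set_integral UNIV (rank_one_density d a b th)
     = vector [vector [complex_of_real (a + d), 0], vector [0, complex_of_real (b + d)]]"
  using integral_gauss_quadratic[where z = 1]
  by (intro cmat2_eqI)
    (simp_all add: mat_set_integral_def set_lebesgue_integral_def rank_one_density_def
      integral_gauss_quadratic)

lemma rank_one_density_add:
  "rank_one_density d a b th y + rank_one_density d' a' b' th y
     = rank_one_density (d + d') (a + a') (b + b') th y"
  by (intro cmat2_eqI; simp add: rank_one_density_def gauss_quadratic_def; algebra)

lemma Q_dens_eq_rank_one_density: "Q_dens epsth th y = rank_one_density (1 - epsth) epsth epsth th y"
  by (intro cmat2_eqI; simp add: Q_dens_def rank_one_density_def gauss_quadratic_eq Let_def; algebra)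

lemma quad_form_rank_one_density:
  "quad_form v (rank_one_density d a b th y) = complex_of_real (normal_density 0 (sqrt (1/2)) y *
     (d * (cmod (v $ 1 + complex_of_real (sqrt 2 * y) * cis (- th) * v $ 2))\<^sup>2
      + a * (cmod (v $ 1))\<^sup>2 + b * (cmod (v $ 2))\<^sup>2))"
proof -
  define s where "s = v $ 1 + complex_of_real (sqrt 2 * y) * cis (- th) * v $ 2"
  have cnj_s: "cnj s = cnj (v $ 1) + complex_of_real (sqrt 2 * y) * cis th * cnj (v $ 2)"
    by (simp add: s_def cis_cnj)
  have "cis (- th) * cis th = 1" by (simp add: cis_mult)
  moreover have "complex_of_real (sqrt 2) * complex_of_real (sqrt 2) = 2"
    by (simp flip: of_real_mult)
  ultimately have "quad_form v (rank_one_density d a b th y)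
      = complex_of_real (normal_density 0 (sqrt (1/2)) y) * (complex_of_real d * (s * cnj s)
        + complex_of_real a * (v $ 1 * cnj (v $ 1)) + complex_of_real b * (v $ 2 * cnj (v $ 2)))"
    unfolding cnj_s unfolding s_def quad_form_2 rank_one_density_def gauss_quadratic_def
    by (simp add: power2_eq_square) algebra
  then show ?thesis
    by (simp only: s_def of_real_mult of_real_add complex_norm_square)
qed

lemma psd_rank_one_density:
  assumes "0 \<le> d" "0 \<le> a" "0 \<le> b"
  shows "psd (rank_one_density d a b th y)"
  using assms by (simp add: psd_iff_quad_form quad_form_rank_one_density)

definition two_outcome_povm :: "(nat \<Rightarrow> real \<Rightarrow> cmat2) \<Rightarrow> (nat \<times> real) set \<Rightarrow> cmat2" where
  "two_outcome_povm F A = mat_set_integral (Pair 0 -` A) (F 0) + mat_set_integral (Pair 1 -` A) (F 1)"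

lemma povm_two_outcome_povm:
  assumes int: "\<And>n i j. integrable lborel (\<lambda>y. F n y $ i $ j)"
    and psd: "\<And>n y. n \<in> {0, 1} \<Longrightarrow> psd (F n y)"
    and total: "mat_set_integral UNIV (F 0) + mat_set_integral UNIV (F 1) = mat 1"
  shows "povm (count_space {0, 1} \<Otimes>\<^sub>M borel) (two_outcome_povm F)"
  unfolding povm_def
proof (intro conjI ballI allI impI)
  let ?M = "count_space {0::nat, 1} \<Otimes>\<^sub>M (borel :: real measure)"
  show "psd (two_outcome_povm F A)" if "A \<in> sets ?M" for A
    using that unfolding two_outcome_povm_def
    by (intro psd_add psd_mat_set_integral int psd sets_Pair1) auto
  have "Pair n -` space ?M = UNIV" if "n \<in> {0, 1}" for n
    using that by (auto simp: space_pair_measure)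
  then show "two_outcome_povm F (space ?M) = mat 1"
    using total by (simp add: two_outcome_povm_def)
  show "(\<lambda>k. two_outcome_povm F (A k)) sums two_outcome_povm F (\<Union>k. A k)"
    if A: "range A \<subseteq> sets ?M" and disj: "disjoint_family A" for A
  proof -
    have "Pair n -` A k \<in> sets borel" for n k
      using A sets_Pair1[of "A k"] by auto
    moreover have "disjoint_family (\<lambda>k. Pair n -` A k)" for n
      using disj by (auto simp: disjoint_family_on_def)
    moreover have "Pair n -` (\<Union>k. A k) = (\<Union>k. Pair n -` A k)" for n
      by auto
    ultimately show ?thesis
      unfolding two_outcome_povm_def by (simp add: sums_add sums_mat_set_integral int)
  qed
qed

lemma two_outcome_povm_outcome:
  "n \<in> {0, 1} \<Longrightarrow> two_outcome_povm F ({n} \<times> UNIV) = mat_set_integral UNIV (F n)"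
  by (auto simp: two_outcome_povm_def)

lemma two_outcome_povm_marginal:
  assumes "\<And>n i j. integrable lborel (\<lambda>y. F n y $ i $ j)" and "Y \<in> sets borel"
  shows "two_outcome_povm F ({0, 1} \<times> Y) = mat_set_integral Y (\<lambda>y. F 0 y + F 1 y)"
proof -
  have "Pair n -` ({0, 1} \<times> Y) = Y" if "n \<in> {0, 1}" for n :: nat
    using that by auto
  then show ?thesis
    using assms by (simp add: two_outcome_povm_def mat_set_integral_add)
qed

lemma jointly_measurable_prono_if_noise_sum_ge_1:
  assumes "eps \<le> 1" "epsth \<le> 1" "1 \<le> eps + epsth"
  shows "jointly_measurable_prono eps epsth th"
proof -
  define d where "d = (1 - epsth) / 2"
  define F where "F n = (if n = 0 then rank_one_density d (1 - eps/2 - d) (eps/2 - d) th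
                         else rank_one_density d (eps/2 - d) (1 - eps/2 - d) th)" for n :: nat
  have int: "integrable lborel (\<lambda>y. F n y $ i $ j)" for n i j
    by (simp add: F_def integrable_rank_one_density)
  have "psd (F n y)" for n y
    using assms unfolding F_def d_def by (simp add: psd_rank_one_density)
  moreover have number: "mat_set_integral UNIV (F n) = N_prono eps n" if "n \<in> {0, 1}" for n
    using that by (auto simp: F_def mat_set_integral_UNIV_rank_one_density N_prono_def)
  moreover have "mat_set_integral UNIV (F 0) + mat_set_integral UNIV (F 1) = mat 1"
    using number[of 0] number[of 1] by (intro cmat2_eqI) (simp_all add: N_prono_def mat_def)
  ultimately have povm: "povm (count_space {0, 1} \<Otimes>\<^sub>M borel) (two_outcome_povm F)"
    using int by (intro povm_two_outcome_povm)
  have "two_outcome_povm F ({0, 1} \<times> Y) = Q_prono epsth th Y" if "Y \<in> sets borel" for Y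
  proof -
    have "F 0 y + F 1 y = Q_dens epsth th y" for y
      by (simp add: F_def d_def rank_one_density_add Q_dens_eq_rank_one_density)
    then have "mat_set_integral Y (\<lambda>y. F 0 y + F 1 y) = Q_prono epsth th Y"
      by (simp add: mat_set_integral_def Q_prono_def)
    then show ?thesis
      using two_outcome_povm_marginal[OF int that] by simp
  qed
  then show ?thesis
    unfolding jointly_measurable_prono_def
    using povm number two_outcome_povm_outcome by metis
qed

theorem mainTheorem8:
  fixes eps epsth th :: real
  assumes "0 \<le> eps" "eps \<le> 1" "0 \<le> epsth" "epsth \<le> 1"
  shows "(2 / (2 - eps) + epsth - 2 \<ge> 0 \<longrightarrow> jointly_measurable_prono eps epsth th)
       \<and> (eps = epsth \<and> eps \<ge> 1/2 \<longrightarrow> jointly_measurable_prono eps epsth th)"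
proof (intro conjI impI)
  assume "2 / (2 - eps) + epsth - 2 \<ge> 0"
  moreover have "2 / (2 - eps) \<le> 1 + eps"
  proof -
    have "eps * eps \<le> eps"
      using assms by (intro mult_right_le_one_le)
    then have "2 \<le> (1 + eps) * (2 - eps)"
      by (simp add: algebra_simps)
    then show ?thesis using assms by (simp add: divide_le_eq)
  qed
  ultimately show "jointly_measurable_prono eps epsth th"
    using assms by (intro jointly_measurable_prono_if_noise_sum_ge_1) auto
next
  assume "eps = epsth \<and> eps \<ge> 1/2"
  then show "jointly_measurable_prono eps epsth th"
    using assms by (intro jointly_measurable_prono_if_noise_sum_ge_1) auto
qed

end
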